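(* $\mathrm{Log}_{=1}(\mathbb{R})=\mathrm{Log}_{=1}(\mathbb{Q})$.
   Context: Modal formulas are built from a countable set of propositional variables using $\bot$, $\to$ and one unary modality $\lozenge$. A frame is a pair $(X,R)$; a valuation assigns subsets of $X$ to variables; $x\models\lozenge\varphi$ iff there is $y$ with $xRy$ and $y\models\varphi$. A formula is valid in a frame if true at every point under every valuation. For a metric space $(X,d)$, $\mathrm{Log}_{=1}(X)$ is the set of modal formulas valid in the frame $(X,R_{=1})$, where $xR_{=1}y$ iff $d(x,y)=1$. $\mathbb{R}$ and $\mathbb{Q}$ carry the metric $d(x,y)=|x-y|$. *)

theory Defs
  imports Complex_Main
begin

datatype fm = Var nat | Bot | Imp fm fm | Dia fm

fun sat :: "'a set \<Rightarrow> ('a \<Rightarrow> 'a \<Rightarrow> bool) \<Rightarrow> (nat \<Rightarrow> 'a set) \<Rightarrow> 'a \<Rightarrow> fm \<Rightarrow> bool" where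
  "sat X R V x (Var p) = (x \<in> V p)"
| "sat X R V x Bot = False"
| "sat X R V x (Imp a b) = (sat X R V x a \<longrightarrow> sat X R V x b)"
| "sat X R V x (Dia a) = (\<exists>y\<in>X. R x y \<and> sat X R V y a)"

definition valid_in_frame :: "'a set \<Rightarrow> ('a \<Rightarrow> 'a \<Rightarrow> bool) \<Rightarrow> fm \<Rightarrow> bool" where
  "valid_in_frame X R \<phi> \<longleftrightarrow> (\<forall>V. (\<forall>p. V p \<subseteq> X) \<longrightarrow> (\<forall>x\<in>X. sat X R V x \<phi>))"

definition Log_eq1 :: "'a set \<Rightarrow> ('a \<Rightarrow> 'a \<Rightarrow> real) \<Rightarrow> fm set" where
  "Log_eq1 X d = {\<phi>. valid_in_frame X (\<lambda>x y. d x y = 1) \<phi>}"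

end

theory Submission
  imports Defs
begin

text \<open>Both frames have the logic of the integer line (\<int>, R_{=1}): the floor map is a
  surjective p-morphism from the real (or rational) frame onto it, and every point x of the
  real (or rational) frame is the image of 0 under the p-morphism n \<mapsto> x + n from the integer
  frame. Validity transfers from a frame to any frame each of whose points lies in the image
  of a p-morphism from it, so all three logics agree.\<close>

definition p_morphism :: "('a \<Rightarrow> 'a \<Rightarrow> bool) \<Rightarrow> ('b \<Rightarrow> 'b \<Rightarrow> bool) \<Rightarrow> ('a \<Rightarrow> 'b) \<Rightarrow> bool" where
  "p_morphism R S f \<longleftrightarrow>
     (\<forall>a a'. R a a' \<longrightarrow> S (f a) (f a')) \<and> (\<forall>a b. S (f a) b \<longrightarrow> (\<exists>a'. R a a' \<and> f a' = b))"

lemma sat_p_morphism: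
  assumes "p_morphism R S f"
  shows "sat UNIV S V (f a) \<phi> \<longleftrightarrow> sat UNIV R (\<lambda>p. f -` V p) a \<phi>"
proof (induction \<phi> arbitrary: a)
  case (Dia \<phi>)
  then show ?case using assms unfolding p_morphism_def by auto metis
qed auto

lemma valid_in_frame_p_morphism_cover:
  assumes "valid_in_frame UNIV R \<phi>"
    and cover: "\<And>b. \<exists>f a. p_morphism R S f \<and> f a = b"
  shows "valid_in_frame UNIV S \<phi>"
  unfolding valid_in_frame_def
proof (intro allI impI ballI)
  fix V and b :: 'b
  obtain f a where "p_morphism R S f" "f a = b" using cover by blast
  moreover have "sat UNIV R (\<lambda>p. f -` V p) a \<phi>"
    using assms(1) by (simp add: valid_in_frame_def)
  ultimately show "sat UNIV S V b \<phi>" using sat_p_morphism by metis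
qed

definition unit_step :: "'a::linordered_idom \<Rightarrow> 'a \<Rightarrow> bool" where
  "unit_step x y \<longleftrightarrow> \<bar>x - y\<bar> = 1"

lemma unit_step_iff: "unit_step x y \<longleftrightarrow> y = x + 1 \<or> y = x - 1"
  unfolding unit_step_def by (auto simp: abs_if algebra_simps)

lemma p_morphism_floor: "p_morphism unit_step unit_step (floor :: 'a::floor_ceiling \<Rightarrow> int)"
  unfolding p_morphism_def unit_step_iff
proof (intro conjI allI impI)
  fix x y :: 'a
  assume "y = x + 1 \<or> y = x - 1"
  then show "\<lfloor>y\<rfloor> = \<lfloor>x\<rfloor> + 1 \<or> \<lfloor>y\<rfloor> = \<lfloor>x\<rfloor> - 1"
    using floor_diff_of_int[of x 1] by auto
next
  fix x :: 'a and n :: int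
  assume "n = \<lfloor>x\<rfloor> + 1 \<or> n = \<lfloor>x\<rfloor> - 1"
  then show "\<exists>y. (y = x + 1 \<or> y = x - 1) \<and> \<lfloor>y\<rfloor> = n"
    using floor_diff_of_int[of x 1] by (metis floor_add_int of_int_1)
qed

lemma p_morphism_translate_int:
  "p_morphism unit_step unit_step (\<lambda>n. x + of_int n :: 'a::linordered_idom)"
  unfolding p_morphism_def unit_step_iff
proof (intro conjI allI impI)
  fix m n :: int
  assume "n = m + 1 \<or> n = m - 1"
  then show "x + of_int n = x + of_int m + 1 \<or> x + of_int n = x + of_int m - 1"
    by auto
next
  fix m :: int and y :: 'a
  assume "y = x + of_int m + 1 \<or> y = x + of_int m - 1"
  then show "\<exists>n. (n = m + 1 \<or> n = m - 1) \<and> x + of_int n = y"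
  proof
    assume "y = x + of_int m + 1"
    then show ?thesis by (intro exI[of _ "m + 1"]) simp
  next
    assume "y = x + of_int m - 1"
    then show ?thesis by (intro exI[of _ "m - 1"]) simp
  qed
qed

lemma valid_unit_step_iff_int:
  "valid_in_frame UNIV (unit_step :: 'a::floor_ceiling \<Rightarrow> _) \<phi>
     \<longleftrightarrow> valid_in_frame UNIV (unit_step :: int \<Rightarrow> _) \<phi>"
proof
  assume "valid_in_frame UNIV (unit_step :: 'a \<Rightarrow> _) \<phi>"
  then show "valid_in_frame UNIV (unit_step :: int \<Rightarrow> _) \<phi>"
    by (rule valid_in_frame_p_morphism_cover)
      (metis p_morphism_floor floor_of_int)
next
  assume "valid_in_frame UNIV (unit_step :: int \<Rightarrow> _) \<phi>"
  then show "valid_in_frame UNIV (unit_step :: 'a \<Rightarrow> _) \<phi>"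
    by (rule valid_in_frame_p_morphism_cover)
      (metis p_morphism_translate_int add_0_right of_int_0)
qed

theorem proposition4p1:
  shows "Log_eq1 (UNIV :: real set) (\<lambda>x y. \<bar>x - y\<bar>)
       = Log_eq1 (UNIV :: rat set) (\<lambda>x y. real_of_rat \<bar>x - y\<bar>)"
proof -
  have rat_frame: "(\<lambda>x y. real_of_rat \<bar>x - y\<bar> = 1) = (unit_step :: rat \<Rightarrow> _)"
    by (auto simp: unit_step_def fun_eq_iff)
  have real_frame: "(\<lambda>x y. \<bar>x - y\<bar> = 1) = (unit_step :: real \<Rightarrow> _)"
    by (auto simp: unit_step_def fun_eq_iff)
  show ?thesis
    unfolding Log_eq1_def rat_frame real_frame valid_unit_step_iff_int ..
qed

end
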